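(* Let $X$ be a proper, geodesically complete, $\delta$-hyperbolic Busemann space, vertically convergent with respect to $\infty_X$, with height function $h_X$ based at $\infty_X$, and let $d'_X$ be defined from an admissible monotone norm $N$. There is a constant $C$ depending only on $\delta$ such that for any points $p,q\in X$, any $d'_X$-geodesic $\gamma'$ from $p$ to $q$ and any $d_X$-geodesic $\gamma$ from $p$ to $q$, the total variations of $h_X$ satisfy $V_{\gamma'}(h_X)\ge V_\gamma(h_X)-C$.
   Context: $V_c(h_X)$ is the total variation of $h_X$ along a path $c$. $d'_X$ is the length metric on $X$ with path length $\sup_{0=t_0<\dots<t_n=1}\sum_iN(d_X(\gamma(t_i),\gamma(t_{i+1})),|h_X(\gamma(t_i))-h_X(\gamma(t_{i+1}))|)$, where $N$ is a norm on $\mathbb{R}^2$ with $N(1,1)=1$, $N(a,b)\ge(|a|+|b|)/2$, non-decreasing in each coordinate on $[0,\infty)^2$. *)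

theory Defs
  imports "HOL-Analysis.Analysis"
begin

text \<open>Metric spaces are given explicitly as a carrier M with a distance d
  (Metric_space M d), so that constants can be required to be uniform over all spaces.\<close>

definition proper_mspace :: "'a set \<Rightarrow> ('a \<Rightarrow> 'a \<Rightarrow> real) \<Rightarrow> bool" where
  "proper_mspace M d \<longleftrightarrow>
     (\<forall>x\<in>M. \<forall>r. compactin (Metric_space.mtopology M d) (Metric_space.mcball M d x r))"

definition geodesic_seg :: "'a set \<Rightarrow> ('a \<Rightarrow> 'a \<Rightarrow> real) \<Rightarrow> (real \<Rightarrow> 'a) \<Rightarrow> real \<Rightarrow> real \<Rightarrow> bool" where
  "geodesic_seg M d c a b \<longleftrightarrow> a \<le> b \<and> c ` {a..b} \<subseteq> M \<and>
     (\<forall>s\<in>{a..b}. \<forall>t\<in>{a..b}. d (c s) (c t) = \<bar>s - t\<bar>)"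

definition geodesic_from_to ::
  "'a set \<Rightarrow> ('a \<Rightarrow> 'a \<Rightarrow> real) \<Rightarrow> (real \<Rightarrow> 'a) \<Rightarrow> 'a \<Rightarrow> 'a \<Rightarrow> bool" where
  "geodesic_from_to M d c p q \<longleftrightarrow> geodesic_seg M d c 0 (d p q) \<and> c 0 = p \<and> c (d p q) = q"

definition geodesic_ray :: "'a set \<Rightarrow> ('a \<Rightarrow> 'a \<Rightarrow> real) \<Rightarrow> (real \<Rightarrow> 'a) \<Rightarrow> bool" where
  "geodesic_ray M d c \<longleftrightarrow> c ` {0..} \<subseteq> M \<and>
     (\<forall>s\<ge>0. \<forall>t\<ge>0. d (c s) (c t) = \<bar>s - t\<bar>)"

definition geodesic_line :: "'a set \<Rightarrow> ('a \<Rightarrow> 'a \<Rightarrow> real) \<Rightarrow> (real \<Rightarrow> 'a) \<Rightarrow> bool" where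
  "geodesic_line M d c \<longleftrightarrow> range c \<subseteq> M \<and> (\<forall>s t. d (c s) (c t) = \<bar>s - t\<bar>)"

definition geodesic_mspace :: "'a set \<Rightarrow> ('a \<Rightarrow> 'a \<Rightarrow> real) \<Rightarrow> bool" where
  "geodesic_mspace M d \<longleftrightarrow> (\<forall>x\<in>M. \<forall>y\<in>M. \<exists>c. geodesic_from_to M d c x y)"

definition geodesically_complete :: "'a set \<Rightarrow> ('a \<Rightarrow> 'a \<Rightarrow> real) \<Rightarrow> bool" where
  "geodesically_complete M d \<longleftrightarrow>
     (\<forall>c a b. a < b \<and> geodesic_seg M d c a b \<longrightarrow>
        (\<exists>g. geodesic_line M d g \<and> (\<forall>t\<in>{a..b}. g t = c t)))"

definition busemann_space :: "'a set \<Rightarrow> ('a \<Rightarrow> 'a \<Rightarrow> real) \<Rightarrow> bool" where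
  "busemann_space M d \<longleftrightarrow> geodesic_mspace M d \<and>
     (\<forall>c1 c2 L1 L2. geodesic_seg M d c1 0 L1 \<and> geodesic_seg M d c2 0 L2 \<longrightarrow>
        convex_on {0..1} (\<lambda>t. d (c1 (t * L1)) (c2 (t * L2))))"

definition gromov_product :: "('a \<Rightarrow> 'a \<Rightarrow> real) \<Rightarrow> 'a \<Rightarrow> 'a \<Rightarrow> 'a \<Rightarrow> real" where
  "gromov_product d w x y = (d x w + d y w - d x y) / 2"

definition delta_hyperbolic :: "'a set \<Rightarrow> ('a \<Rightarrow> 'a \<Rightarrow> real) \<Rightarrow> real \<Rightarrow> bool" where
  "delta_hyperbolic M d \<delta> \<longleftrightarrow> (\<forall>w\<in>M. \<forall>x\<in>M. \<forall>y\<in>M. \<forall>z\<in>M.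
     gromov_product d w x z \<ge> min (gromov_product d w x y) (gromov_product d w y z) - \<delta>)"

text \<open>The boundary point \<infinity>_X is represented by a geodesic ray \<rho> converging to it;
  geodesic rays converge to the same boundary point iff they stay at bounded distance.\<close>
definition asymptotic_rays :: "('a \<Rightarrow> 'a \<Rightarrow> real) \<Rightarrow> (real \<Rightarrow> 'a) \<Rightarrow> (real \<Rightarrow> 'a) \<Rightarrow> bool" where
  "asymptotic_rays d c1 c2 \<longleftrightarrow> (\<exists>B. \<forall>t\<ge>0. d (c1 t) (c2 t) \<le> B)"

definition vertically_convergent :: "'a set \<Rightarrow> ('a \<Rightarrow> 'a \<Rightarrow> real) \<Rightarrow> (real \<Rightarrow> 'a) \<Rightarrow> bool" where
  "vertically_convergent M d \<rho> \<longleftrightarrow>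
     (\<forall>c1 c2. geodesic_ray M d c1 \<and> geodesic_ray M d c2 \<and>
        asymptotic_rays d c1 \<rho> \<and> asymptotic_rays d c2 \<rho> \<longrightarrow>
        (\<exists>t0. ((\<lambda>t. d (c1 t) (c2 (t + t0))) \<longlongrightarrow> 0) at_top))"

text \<open>Height function based at the boundary point of \<rho> (a Busemann function, with
  the sign chosen so that height increases towards \<infinity>_X).\<close>
definition height_fun :: "('a \<Rightarrow> 'a \<Rightarrow> real) \<Rightarrow> (real \<Rightarrow> 'a) \<Rightarrow> 'a \<Rightarrow> real" where
  "height_fun d \<rho> x = Lim at_top (\<lambda>t. t - d x (\<rho> t))"

definition admissible_norm :: "(real \<Rightarrow> real \<Rightarrow> real) \<Rightarrow> bool" where
  "admissible_norm N \<longleftrightarrow>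
     (\<forall>a b. N a b \<ge> 0) \<and> (\<forall>a b. N a b = 0 \<longleftrightarrow> a = 0 \<and> b = 0) \<and>
     (\<forall>c a b. N (c * a) (c * b) = \<bar>c\<bar> * N a b) \<and>
     (\<forall>a b a' b'. N (a + a') (b + b') \<le> N a b + N a' b') \<and>
     N 1 1 = 1 \<and> (\<forall>a b. N a b \<ge> (\<bar>a\<bar> + \<bar>b\<bar>) / 2) \<and>
     (\<forall>a b a' b'. 0 \<le> a \<and> a \<le> a' \<and> 0 \<le> b \<and> b \<le> b' \<longrightarrow> N a b \<le> N a' b')"

definition partition_of :: "real \<Rightarrow> real \<Rightarrow> nat \<Rightarrow> (nat \<Rightarrow> real) \<Rightarrow> bool" where
  "partition_of a b n t \<longleftrightarrow> t 0 = a \<and> t n = b \<and> (\<forall>i<n. t i < t (Suc i))"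

definition total_variation :: "(real \<Rightarrow> real) \<Rightarrow> real \<Rightarrow> real \<Rightarrow> ereal" where
  "total_variation f a b =
     (SUP nt \<in> {(n, t). partition_of a b n t}.
        ereal (\<Sum>i<fst nt. \<bar>f (snd nt (Suc i)) - f (snd nt i)\<bar>))"

definition N_length :: "('a \<Rightarrow> 'a \<Rightarrow> real) \<Rightarrow> ('a \<Rightarrow> real) \<Rightarrow> (real \<Rightarrow> real \<Rightarrow> real)
    \<Rightarrow> (real \<Rightarrow> 'a) \<Rightarrow> ereal" where
  "N_length d h N c =
     (SUP nt \<in> {(n, t). partition_of 0 1 n t}.
        ereal (\<Sum>i<fst nt. N (d (c (snd nt i)) (c (snd nt (Suc i))))
                             \<bar>h (c (snd nt i)) - h (c (snd nt (Suc i)))\<bar>))"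

definition d_prime :: "'a set \<Rightarrow> ('a \<Rightarrow> 'a \<Rightarrow> real) \<Rightarrow> ('a \<Rightarrow> real) \<Rightarrow> (real \<Rightarrow> real \<Rightarrow> real)
    \<Rightarrow> 'a \<Rightarrow> 'a \<Rightarrow> real" where
  "d_prime M d h N x y = real_of_ereal
     (INF c \<in> {c. continuous_map (top_of_set {0..1}) (Metric_space.mtopology M d) c
                 \<and> c 0 = x \<and> c 1 = y}. N_length d h N c)"

end

theory Submission
  imports Defs
begin

text \<open>Write \<open>h\<close> for the height and \<open>T(x,y) = (h x + h y + d x y) / 2\<close>. Up to \<open>O(\<delta>)\<close>,
  \<open>T(x,y)\<close> is the largest height reached by a geodesic from \<open>x\<close> to \<open>y\<close>, and \<open>\<delta>\<close>-hyperbolicity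
  makes \<open>T\<close> an ultrametric up to the additive error \<open>\<delta>\<close>. Since \<open>d' \<ge> N(d, |\<Delta>h|) \<ge> (d + |\<Delta>h|)/2\<close>,
  consecutive points at spacing \<open>\<beta> = 2(\<delta> + 1)\<close> on a \<open>d'\<close>-geodesic \<open>\<gamma>'\<close> of length
  \<open>D \<le> d(p,q)\<close> have \<open>T\<close> at most their height plus \<open>\<beta>\<close>. The chain inequality for the
  \<open>sqrt 2\<close>-quasi-ultrametric \<open>2 powr (T/\<beta>)\<close>, together with the fact that \<open>h\<close> is 1-Lipschitz along
  \<open>\<gamma>'\<close>, forces \<open>\<gamma>'\<close> to reach height \<open>T(p,q) - 7\<beta>\<close>. Climbing there and back costs a
  variation of at least \<open>2 T(p,q) - h p - h q - 14\<beta> = d(p,q) - 28(\<delta> + 1)\<close>, whereas along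
  the \<open>d\<close>-geodesic \<open>\<gamma>\<close> the variation of the 1-Lipschitz function \<open>h\<close> is at most \<open>d(p,q)\<close>.\<close>

section \<open>Height and peak height\<close>

lemma height_fun_tendsto:
  assumes "Metric_space M d" and ray: "geodesic_ray M d \<rho>" and "x \<in> M"
  shows "((\<lambda>t. t - d x (\<rho> t)) \<longlongrightarrow> height_fun d \<rho> x) at_top"
proof -
  interpret Metric_space M d by fact
  define f where "f t = t - d x (\<rho> t)" for t
  have \<rho>M: "\<rho> t \<in> M" and \<rho>dist: "d (\<rho> s) (\<rho> t) = \<bar>s - t\<bar>" if "0 \<le> s" "0 \<le> t" for s t
    using ray that unfolding geodesic_ray_def by auto
  have mono: "f s \<le> f t" if "0 \<le> s" "s \<le> t" for s t
    using triangle[of x "\<rho> s" "\<rho> t"] \<rho>dist[of s t] \<rho>M[of s s] \<rho>M[of t t] \<open>x \<in> M\<close> that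
    unfolding f_def by auto
  have bound: "f t \<le> d x (\<rho> 0)" if "0 \<le> t" for t
    using triangle[of "\<rho> 0" x "\<rho> t"] \<rho>dist[of 0 t] \<rho>M[of 0 0] \<rho>M[of t t] \<open>x \<in> M\<close> that
      commute[of x "\<rho> 0"]
    unfolding f_def by auto
  define l where "l = (SUP t\<in>{0..}. f t)"
  have bdd: "bdd_above (f ` {0..})"
    using bound by (intro bdd_aboveI2[where M = "d x (\<rho> 0)"]) auto
  have "(f \<longlongrightarrow> l) at_top"
  proof (rule order_tendstoI)
    fix a assume "a < l"
    then obtain t0 where t0: "0 \<le> t0" "a < f t0"
      unfolding l_def using less_cSUP_iff[OF _ bdd] by auto
    show "eventually (\<lambda>t. a < f t) at_top"
      using eventually_ge_at_top[of t0] by eventually_elim (use t0 mono in force)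
  next
    fix a assume "l < a"
    have below: "f t \<le> l" if "0 \<le> t" for t
      unfolding l_def using cSUP_upper[OF _ bdd] that by auto
    show "eventually (\<lambda>t. f t < a) at_top"
      using eventually_ge_at_top[of 0] by eventually_elim (use below \<open>l < a\<close> in force)
  qed
  moreover from this have "height_fun d \<rho> x = l"
    unfolding height_fun_def f_def by (intro tendsto_Lim) auto
  ultimately show ?thesis unfolding f_def by simp
qed

lemma height_fun_lipschitz:
  assumes "Metric_space M d" and ray: "geodesic_ray M d \<rho>" and "x \<in> M" and "y \<in> M"
  shows "\<bar>height_fun d \<rho> x - height_fun d \<rho> y\<bar> \<le> d x y"
proof (rule tendsto_le[OF trivial_limit_at_top_linorder tendsto_const])
  interpret Metric_space M d by fact
  show "((\<lambda>t. \<bar>(t - d x (\<rho> t)) - (t - d y (\<rho> t))\<bar>) \<longlongrightarrow>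
      \<bar>height_fun d \<rho> x - height_fun d \<rho> y\<bar>) at_top"
    using assms by (intro tendsto_rabs tendsto_diff height_fun_tendsto)
  show "eventually (\<lambda>t. \<bar>(t - d x (\<rho> t)) - (t - d y (\<rho> t))\<bar> \<le> d x y) at_top"
    using eventually_ge_at_top[of 0] proof eventually_elim
    case (elim t)
    then have "\<rho> t \<in> M"
      using ray unfolding geodesic_ray_def by auto
    then show ?case
      using triangle[of x y "\<rho> t"] triangle[of y x "\<rho> t"] commute[of x y] assms(3,4) by auto
  qed
qed

text \<open>The limit of \<open>t\<close> minus the Gromov product of \<open>x\<close> and \<open>y\<close> based at \<open>\<rho> t\<close>: up to an
  error of order \<open>\<delta>\<close>, the largest height reached by a geodesic from \<open>x\<close> to \<open>y\<close>.\<close>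
definition peak_height :: "('a \<Rightarrow> 'a \<Rightarrow> real) \<Rightarrow> (real \<Rightarrow> 'a) \<Rightarrow> 'a \<Rightarrow> 'a \<Rightarrow> real" where
  "peak_height d \<rho> x y = (height_fun d \<rho> x + height_fun d \<rho> y + d x y) / 2"

lemma peak_height_quasi_ultrametric:
  assumes "Metric_space M d" and ray: "geodesic_ray M d \<rho>" and hyp: "delta_hyperbolic M d \<delta>"
    and "x \<in> M" and "y \<in> M" and "z \<in> M"
  shows "peak_height d \<rho> x z \<le> max (peak_height d \<rho> x y) (peak_height d \<rho> y z) + \<delta>"
proof -
  define P where "P a b t = ((t - d a (\<rho> t)) + (t - d b (\<rho> t)) + d a b) / 2" for a b t
  have P_tendsto: "(P a b \<longlongrightarrow> peak_height d \<rho> a b) at_top" if "a \<in> M" "b \<in> M" for a b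
    unfolding P_def peak_height_def
    using assms(1,2) that by (intro tendsto_divide tendsto_add tendsto_const height_fun_tendsto) auto
  show ?thesis
  proof (rule tendsto_le[OF trivial_limit_at_top_linorder _ P_tendsto])
    show "((\<lambda>t. max (P x y t) (P y z t) + \<delta>) \<longlongrightarrow>
        max (peak_height d \<rho> x y) (peak_height d \<rho> y z) + \<delta>) at_top"
      using assms by (intro tendsto_add tendsto_max P_tendsto tendsto_const)
    show "eventually (\<lambda>t. P x z t \<le> max (P x y t) (P y z t) + \<delta>) at_top"
      using eventually_ge_at_top[of 0] proof eventually_elim
      case (elim t)
      then have "\<rho> t \<in> M"
        using ray unfolding geodesic_ray_def by auto
      then have "min (gromov_product d (\<rho> t) x y) (gromov_product d (\<rho> t) y z) - \<delta>
          \<le> gromov_product d (\<rho> t) x z"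
        using hyp assms(4-6) unfolding delta_hyperbolic_def by blast
      then show ?case
        unfolding gromov_product_def P_def by (auto simp: field_simps min_def max_def split: if_splits)
    qed
  qed (use assms in auto)
qed

section \<open>Total variation and the length metric \<open>d'\<close>\<close>

lemma partition_of_mono:
  assumes "partition_of a b n t" and "i \<le> j" and "j \<le> n"
  shows "t i \<le> t j"
  using assms(2,3)
proof (induction j rule: dec_induct)
  case (step j)
  then show ?case
    using assms(1) unfolding partition_of_def by (meson Suc_le_lessD less_imp_le order_trans)
qed simp

lemma partition_of_range:
  assumes "partition_of a b n t" and "i \<le> n"
  shows "t i \<in> {a..b}"
  using partition_of_mono[OF assms(1), of 0 i] partition_of_mono[OF assms(1), of i n] assms
  unfolding partition_of_def by auto

lemma total_variation_ge_partition_sum: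
  assumes "partition_of a b n t"
  shows "ereal (\<Sum>i<n. \<bar>f (t (Suc i)) - f (t i)\<bar>) \<le> total_variation f a b"
  unfolding total_variation_def by (rule SUP_upper2[where i = "(n, t)"]) (use assms in auto)

lemma total_variation_ge_abs_diff:
  assumes "a \<le> b"
  shows "ereal \<bar>f b - f a\<bar> \<le> total_variation f a b"
proof (cases "a = b")
  case True
  then have "partition_of a b 0 (\<lambda>_. a)"
    unfolding partition_of_def by simp
  from total_variation_ge_partition_sum[OF this, of f] show ?thesis
    using True by simp
next
  case False
  with assms have "partition_of a b 1 (\<lambda>i. if i = 0 then a else b)"
    unfolding partition_of_def by simp
  from total_variation_ge_partition_sum[OF this, of f] show ?thesis
    by simp
qed

lemma total_variation_ge_via_point:
  assumes "a \<le> s" and "s \<le> b"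
  shows "ereal (\<bar>f s - f a\<bar> + \<bar>f b - f s\<bar>) \<le> total_variation f a b"
proof (cases "s = a \<or> s = b")
  case True
  then show ?thesis
    using total_variation_ge_abs_diff[of a b f] assms by auto
next
  case False
  with assms have "partition_of a b 2 (\<lambda>i. if i = 0 then a else if i = 1 then s else b)"
    unfolding partition_of_def by (auto simp: less_2_cases_iff)
  from total_variation_ge_partition_sum[OF this, of f] show ?thesis
    by (simp add: numeral_2_eq_2)
qed

lemma total_variation_le_lipschitz:
  assumes "\<And>s s'. s \<in> {a..b} \<Longrightarrow> s' \<in> {a..b} \<Longrightarrow> \<bar>f s - f s'\<bar> \<le> \<bar>s - s'\<bar>"
  shows "total_variation f a b \<le> ereal (b - a)"
  unfolding total_variation_def
proof (rule SUP_least, clarsimp)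
  fix n t assume P: "partition_of a b n t"
  have "(\<Sum>i<n. \<bar>f (t (Suc i)) - f (t i)\<bar>) \<le> (\<Sum>i<n. t (Suc i) - t i)"
  proof (rule sum_mono)
    fix i assume "i \<in> {..<n}"
    then have "t i \<in> {a..b}" "t (Suc i) \<in> {a..b}" "t i < t (Suc i)"
      using partition_of_range[OF P] P unfolding partition_of_def by auto
    then show "\<bar>f (t (Suc i)) - f (t i)\<bar> \<le> t (Suc i) - t i"
      using assms[of "t (Suc i)" "t i"] by simp
  qed
  also have "\<dots> = b - a"
    using P unfolding partition_of_def by (simp add: sum_lessThan_telescope)
  finally show "(\<Sum>i<n. \<bar>f (t (Suc i)) - f (t i)\<bar>) \<le> b - a" .
qed

lemma admissible_norm_ge:
  assumes "admissible_norm N"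
  shows "(\<bar>a\<bar> + \<bar>b\<bar>) / 2 \<le> N a b"
  using assms unfolding admissible_norm_def by blast

lemma admissible_norm_le:
  assumes "admissible_norm N" and "0 \<le> b" and "b \<le> a"
  shows "N a b \<le> a"
proof -
  have "N a b \<le> N (a * 1) (a * 1)"
    using assms unfolding admissible_norm_def by auto
  also have "\<dots> = \<bar>a\<bar> * N 1 1"
    using assms(1) unfolding admissible_norm_def by blast
  also have "\<dots> = a"
    using assms unfolding admissible_norm_def by simp
  finally show ?thesis .
qed

lemma N_length_ge_endpoints:
  "ereal (N (d (c 0) (c 1)) \<bar>h (c 0) - h (c 1)\<bar>) \<le> N_length d h N c"
proof -
  have "partition_of 0 1 1 real"
    unfolding partition_of_def by simp
  then show ?thesis
    unfolding N_length_def by (intro SUP_upper2[where i = "(1, real)"]) auto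
qed

lemma N_length_le_lipschitz:
  assumes "admissible_norm N"
    and h: "\<And>x y. x \<in> M \<Longrightarrow> y \<in> M \<Longrightarrow> \<bar>h x - h y\<bar> \<le> d x y"
    and c: "c ` {0..1} \<subseteq> M"
    and lip: "\<And>s s'. s \<in> {0..1} \<Longrightarrow> s' \<in> {0..1} \<Longrightarrow> d (c s) (c s') \<le> L * \<bar>s - s'\<bar>"
  shows "N_length d h N c \<le> ereal L"
  unfolding N_length_def
proof (rule SUP_least, clarsimp)
  fix n t assume P: "partition_of 0 1 n t"
  have "(\<Sum>i<n. N (d (c (t i)) (c (t (Suc i)))) \<bar>h (c (t i)) - h (c (t (Suc i)))\<bar>)
      \<le> (\<Sum>i<n. L * (t (Suc i) - t i))"
  proof (rule sum_mono)
    fix i assume "i \<in> {..<n}"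
    then have t: "t i \<in> {0..1}" "t (Suc i) \<in> {0..1}" "t i < t (Suc i)"
      using partition_of_range[OF P] P unfolding partition_of_def by auto
    then have "\<bar>h (c (t i)) - h (c (t (Suc i)))\<bar> \<le> d (c (t i)) (c (t (Suc i)))"
      using c by (intro h) auto
    then have "N (d (c (t i)) (c (t (Suc i)))) \<bar>h (c (t i)) - h (c (t (Suc i)))\<bar>
        \<le> d (c (t i)) (c (t (Suc i)))"
      by (rule admissible_norm_le[OF assms(1) abs_ge_zero])
    also have "\<dots> \<le> L * \<bar>t i - t (Suc i)\<bar>"
      using lip t(1,2) by blast
    also have "\<dots> = L * (t (Suc i) - t i)"
      using t(3) by simp
    finally show "N (d (c (t i)) (c (t (Suc i)))) \<bar>h (c (t i)) - h (c (t (Suc i)))\<bar>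
        \<le> L * (t (Suc i) - t i)" .
  qed
  also have "\<dots> = L"
    using P unfolding partition_of_def by (simp add: sum_distrib_left[symmetric] sum_lessThan_telescope)
  finally show "(\<Sum>i<n. N (d (c (t i)) (c (t (Suc i)))) \<bar>h (c (t i)) - h (c (t (Suc i)))\<bar>) \<le> L" .
qed

lemma lipschitz_path_continuous_map:
  assumes "Metric_space M d" and "c ` {a..b} \<subseteq> M"
    and "\<And>s s'. s \<in> {a..b} \<Longrightarrow> s' \<in> {a..b} \<Longrightarrow> d (c s) (c s') \<le> K * \<bar>s - s'\<bar>"
  shows "continuous_map (top_of_set {a..b}) (Metric_space.mtopology M d) c"
proof -
  interpret Metric_space M d by fact
  have "Lipschitz_continuous_map (submetric euclidean_metric {a..b}) (metric (M, d)) c"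
    unfolding Lipschitz_continuous_map_def using assms(2,3)
    by (auto simp: dist_real_def intro!: exI[of _ K])
  then show ?thesis
    using Lipschitz_continuous_imp_continuous_map by (fastforce simp: mtopology_of_submetric)
qed

lemma d_prime_bounds:
  assumes "Metric_space M d" and "geodesic_mspace M d" and "admissible_norm N"
    and h: "\<And>x y. x \<in> M \<Longrightarrow> y \<in> M \<Longrightarrow> \<bar>h x - h y\<bar> \<le> d x y"
    and "x \<in> M" and "y \<in> M"
  shows "N (d x y) \<bar>h x - h y\<bar> \<le> d_prime M d h N x y" and "d_prime M d h N x y \<le> d x y"
proof -
  interpret Metric_space M d by fact
  define paths where "paths = {c :: real \<Rightarrow> 'a. continuous_map (top_of_set {0..1}) mtopology c \<and> c 0 = x \<and> c 1 = y}"
  define I where "I = (INF c \<in> paths. N_length d h N c)"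
  obtain g where "geodesic_from_to M d g x y"
    using assms(2,5,6) unfolding geodesic_mspace_def by blast
  then have gM: "g ` {0..d x y} \<subseteq> M" and g: "g 0 = x" "g (d x y) = y"
    and g_dist: "\<And>s s'. s \<in> {0..d x y} \<Longrightarrow> s' \<in> {0..d x y} \<Longrightarrow> d (g s) (g s') = \<bar>s - s'\<bar>"
    unfolding geodesic_from_to_def geodesic_seg_def by auto
  define c where "c s = g (s * d x y)" for s
  have scaled: "s * d x y \<in> {0..d x y}" if "s \<in> {0..1}" for s
    using that by (auto simp: mult_left_le_one_le)
  have cM: "c ` {0..1} \<subseteq> M"
    unfolding c_def using gM scaled by auto
  have c_dist: "d (c s) (c s') \<le> d x y * \<bar>s - s'\<bar>" if "s \<in> {0..1}" "s' \<in> {0..1}" for s s'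
    unfolding c_def using g_dist[OF scaled[OF that(1)] scaled[OF that(2)]]
    by (simp add: abs_mult left_diff_distrib[symmetric])
  have "c \<in> paths"
    unfolding paths_def using lipschitz_path_continuous_map[OF assms(1) cM c_dist] g
    by (simp add: c_def[abs_def])
  moreover have "N_length d h N c \<le> ereal (d x y)"
    by (rule N_length_le_lipschitz[OF assms(3) _ cM c_dist]) (rule h)
  ultimately have "I \<le> ereal (d x y)"
    unfolding I_def by (blast intro: INF_lower2)
  moreover have "ereal (N (d x y) \<bar>h x - h y\<bar>) \<le> I"
    unfolding I_def paths_def using N_length_ge_endpoints by (auto intro!: INF_greatest)
  moreover have "d_prime M d h N x y = real_of_ereal I"
    unfolding d_prime_def I_def paths_def by simp
  ultimately show "N (d x y) \<bar>h x - h y\<bar> \<le> d_prime M d h N x y" "d_prime M d h N x y \<le> d x y"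
    by (cases I; simp)+
qed

lemma d_prime_geodesic_bound:
  assumes "Metric_space M d" and "geodesic_mspace M d" and "admissible_norm N"
    and h: "\<And>x y. x \<in> M \<Longrightarrow> y \<in> M \<Longrightarrow> \<bar>h x - h y\<bar> \<le> d x y"
    and c: "geodesic_seg M (d_prime M d h N) c 0 D"
    and "s \<in> {0..D}" and "s' \<in> {0..D}"
  shows "d (c s) (c s') + \<bar>h (c s) - h (c s')\<bar> \<le> 2 * \<bar>s - s'\<bar>"
proof -
  interpret Metric_space M d by fact
  have "c s \<in> M" "c s' \<in> M"
    using c assms(6,7) unfolding geodesic_seg_def by auto
  have "(\<bar>d (c s) (c s')\<bar> + \<bar>\<bar>h (c s) - h (c s')\<bar>\<bar>) / 2 \<le> N (d (c s) (c s')) \<bar>h (c s) - h (c s')\<bar>"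
    by (rule admissible_norm_ge[OF assms(3)])
  also have "\<dots> \<le> d_prime M d h N (c s) (c s')"
    by (rule d_prime_bounds(1)[OF assms(1-3) h \<open>c s \<in> M\<close> \<open>c s' \<in> M\<close>])
  also have "\<dots> = \<bar>s - s'\<bar>"
    using c assms(6,7) unfolding geodesic_seg_def by blast
  finally show ?thesis by simp
qed

section \<open>Chains in quasi-ultrametric spaces\<close>

lemma quasi_ultrametric_chain_le:
  fixes E :: "'a \<Rightarrow> 'a \<Rightarrow> real" and x :: "nat \<Rightarrow> 'a"
  assumes nonneg: "\<And>a b. a \<in> S \<Longrightarrow> b \<in> S \<Longrightarrow> 0 \<le> E a b"
    and quasi: "\<And>a b c. a \<in> S \<Longrightarrow> b \<in> S \<Longrightarrow> c \<in> S \<Longrightarrow> E a c \<le> sqrt 2 * max (E a b) (E b c)"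
    and x: "\<And>k. x k \<in> S" and "i < j"
  shows "E (x i) (x j) \<le> 2 * (\<Sum>k=i..<j. E (x k) (x (Suc k)))"
  using \<open>i < j\<close>
proof (induction "j - i" arbitrary: i j rule: less_induct)
  case less
  define e where "e k = E (x k) (x (Suc k))" for k
  define \<Sigma> where "\<Sigma> = (\<Sum>k=i..<j. e k)"
  have e_nonneg: "0 \<le> e k" for k
    unfolding e_def using nonneg x by blast
  then have "0 \<le> \<Sigma>"
    unfolding \<Sigma>_def by (simp add: sum_nonneg)
  have total: "(\<Sum>k=i..<j. E (x k) (x (Suc k))) = \<Sigma>"
    unfolding \<Sigma>_def e_def ..
  have \<Sigma>_le: "\<Sigma> \<le> sqrt 2 * \<Sigma>" "sqrt 2 * \<Sigma> \<le> 2 * \<Sigma>"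
    using mult_right_mono[OF _ \<open>0 \<le> \<Sigma>\<close>, of 1 "sqrt 2"]
      mult_right_mono[OF _ \<open>0 \<le> \<Sigma>\<close>, of "sqrt 2" 2] sqrt2_less_2 by auto
  have IH: "E (x k) (x l) \<le> 2 * (\<Sum>r=k..<l. e r)" if "i \<le> k" "k < l" "l \<le> j" "l - k < j - i" for k l
    using less.hyps[of l k] that unfolding e_def by blast
  \<comment> \<open>split the chain where its partial sums pass half of the total\<close>
  obtain m where m: "i \<le> m" "m < j" "(\<Sum>r=i..<m. e r) \<le> \<Sigma> / 2"
    and m_max: "\<And>k. i \<le> k \<Longrightarrow> k < j \<Longrightarrow> (\<Sum>r=i..<k. e r) \<le> \<Sigma> / 2 \<Longrightarrow> k \<le> m"
    using Nat.ex_has_greatest_nat[of "\<lambda>k. i \<le> k \<and> k < j \<and> (\<Sum>r=i..<k. e r) \<le> \<Sigma> / 2" i j]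
      less.prems \<open>0 \<le> \<Sigma>\<close> by auto
  have e_m: "e m \<le> \<Sigma>"
    unfolding \<Sigma>_def using m e_nonneg by (intro member_le_sum) auto
  have left: "E (x i) (x m) \<le> \<Sigma>" if "i < m"
    using IH[of i m] m that by linarith
  have right: "E (x (Suc m)) (x j) \<le> \<Sigma>" if "Suc m < j"
  proof -
    have "\<Sigma> = (\<Sum>r=i..<Suc m. e r) + (\<Sum>r=Suc m..<j. e r)"
      unfolding \<Sigma>_def using m that by (intro sum.atLeastLessThan_concat[symmetric]) auto
    moreover have "\<Sigma> / 2 < (\<Sum>r=i..<Suc m. e r)"
      using m_max[of "Suc m"] m that by fastforce
    ultimately show ?thesis
      using IH[of "Suc m" j] m that by linarith
  qed
  have m_to_j: "E (x m) (x j) \<le> sqrt 2 * \<Sigma>"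
  proof (cases "Suc m = j")
    case True
    then show ?thesis
      using e_m \<Sigma>_le unfolding e_def by auto
  next
    case False
    then have "E (x m) (x j) \<le> sqrt 2 * max (e m) (E (x (Suc m)) (x j))"
      unfolding e_def using quasi x by blast
    also have "\<dots> \<le> sqrt 2 * \<Sigma>"
      using e_m right False m by (intro mult_left_mono) auto
    finally show ?thesis .
  qed
  show ?case
  proof (cases "i = m")
    case True
    then show ?thesis
      using m_to_j \<Sigma>_le total by simp
  next
    case False
    then have "E (x i) (x j) \<le> sqrt 2 * max (E (x i) (x m)) (E (x m) (x j))"
      using quasi x by blast
    also have "\<dots> \<le> sqrt 2 * (sqrt 2 * \<Sigma>)"
      using left m m_to_j False \<Sigma>_le by (intro mult_left_mono) auto
    finally show ?thesis
      using total by (simp add: mult.assoc[symmetric])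
  qed
qed

lemma powr_quasi_ultrametric:
  fixes x y z :: real
  assumes "0 < \<beta>" and "z \<le> max x y + \<beta> / 2"
  shows "2 powr (z / \<beta>) \<le> sqrt 2 * max (2 powr (x / \<beta>)) (2 powr (y / \<beta>))"
proof -
  have "z / \<beta> \<le> (max x y + \<beta> / 2) / \<beta>"
    using assms by (intro divide_right_mono) auto
  also have "\<dots> = max x y / \<beta> + 1 / 2"
    using assms(1) by (simp add: field_simps)
  finally have "2 powr (z / \<beta>) \<le> 2 powr (max x y / \<beta> + 1 / 2)"
    by (intro powr_mono) auto
  also have "\<dots> = sqrt 2 * 2 powr (max x y / \<beta>)"
    by (simp add: powr_add powr_half_sqrt)
  also have "max x y / \<beta> = max (x / \<beta>) (y / \<beta>)"
    using assms(1) by (simp add: max_def divide_le_cancel)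
  also have "2 powr max (x / \<beta>) (y / \<beta>) = max (2 powr (x / \<beta>)) (2 powr (y / \<beta>))"
    by (simp add: max_def)
  finally show ?thesis .
qed

lemma sum_powr_below_le:
  "(\<Sum>i<n. if real i < a then 2 powr (real i - a) else 0) \<le> 2"
proof -
  have "(\<Sum>i<n. if real i < a then 2 powr (real i - a) else 0) \<le> min (2 powr (real n - a)) 2"
  proof (induction n)
    case (Suc n)
    show ?case
    proof (cases "real n < a")
      case True
      then have "2 powr (real n - a) < 1"
        using powr_less_mono[of "real n - a" 0 2] by simp
      moreover have "2 powr (real (Suc n) - a) = 2 * 2 powr (real n - a)"
        using powr_add[of 2 "real n - a" 1] by (simp add: algebra_simps)
      ultimately show ?thesis
        using Suc True by auto
    next
      case False
      have "2 powr (real n - a) \<le> 2 powr (real (Suc n) - a)"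
        by (intro powr_mono) auto
      moreover have "(\<Sum>i<Suc n. if real i < a then 2 powr (real i - a) else 0)
          = (\<Sum>i<n. if real i < a then 2 powr (real i - a) else 0)"
        using False by simp
      ultimately show ?thesis
        using Suc unfolding min.bounded_iff by linarith
    qed
  qed simp
  then show ?thesis by simp
qed

lemma sum_powr_above_le:
  "(\<Sum>i<n. if b < real i then 2 powr (b - real i) else 0) \<le> 2"
proof -
  have "(\<Sum>i<n. if b < real i then 2 powr (b - real i) else 0) \<le> 2 - min 2 (2 powr (b - real n + 1))"
  proof (induction n)
    case (Suc n)
    show ?case
    proof (cases "b < real n")
      case True
      then have "2 powr (b - real n) < 1"
        using powr_less_mono[of "b - real n" 0 2] by simp
      moreover have "2 powr (b - real n + 1) = 2 * 2 powr (b - real n)"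
        by (simp add: powr_add)
      ultimately show ?thesis
        using Suc True by auto
    next
      case False
      then have "2 powr 1 \<le> 2 powr (b - real n + 1)"
        by (intro powr_mono) auto
      then show ?thesis
        using Suc False by auto
    qed
  qed (simp add: add_pos_nonneg)
  then show ?thesis
    by (smt (verit) powr_gt_zero)
qed

lemma sum_indicator_window_le:
  assumes "a \<le> b"
  shows "(\<Sum>i<n. if a \<le> real i \<and> real i \<le> b then 1 else 0) \<le> b - a + (1::real)"
proof -
  have "(\<Sum>i<n. if a \<le> real i \<and> real i \<le> b then 1 else 0) \<le> max 0 (min (real n) (b + 1) - a)"
    by (induction n) (auto simp: max_def min_def split: if_splits)
  then show ?thesis
    using assms by simp
qed

lemma sum_powr_tent_le:
  fixes v :: "nat \<Rightarrow> real"
  assumes "a \<le> b" and v: "\<And>i. i < n \<Longrightarrow> v i \<le> 0 \<and> v i \<le> real i - a \<and> v i \<le> b - real i"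
  shows "(\<Sum>i<n. 2 powr v i) \<le> b - a + 5"
proof -
  define below where "below i = (if real i < a then 2 powr (real i - a) else 0)" for i :: nat
  define window where "window i = (if a \<le> real i \<and> real i \<le> b then 1 else 0 :: real)" for i :: nat
  define above where "above i = (if b < real i then 2 powr (b - real i) else 0)" for i :: nat
  have pointwise: "2 powr v i \<le> below i + window i + above i" if "i < n" for i
  proof -
    consider "real i < a" | "a \<le> real i \<and> real i \<le> b" | "b < real i"
      by linarith
    then show ?thesis
    proof cases
      case 1
      then show ?thesis
        using v[OF that] assms unfolding below_def window_def above_def by (auto intro: powr_mono)
    next
      case 2
      then show ?thesis
        using v[OF that] powr_mono[of "v i" 0 2] unfolding below_def window_def above_def by auto
    next
      case 3
      then show ?thesis
        using v[OF that] assms unfolding below_def window_def above_def by (auto intro: powr_mono)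
    qed
  qed
  have "(\<Sum>i<n. 2 powr v i) \<le> (\<Sum>i<n. below i + window i + above i)"
    using pointwise by (intro sum_mono) auto
  also have "\<dots> = (\<Sum>i<n. below i) + (\<Sum>i<n. window i) + (\<Sum>i<n. above i)"
    by (simp add: sum.distrib)
  also have "\<dots> \<le> 2 + (b - a + 1) + 2"
    using sum_powr_below_le[where n = n and a = a] sum_indicator_window_le[OF assms(1), where n = n]
      sum_powr_above_le[where n = n and b = b]
    unfolding below_def window_def above_def by linarith
  finally show ?thesis by simp
qed

lemma powr_le_linear_imp_less:
  fixes k :: real
  assumes "2 powr k \<le> 8 * k + 20"
  shows "k < 7"
proof (rule ccontr)
  assume "\<not> k < 7"
  define m where "m = nat \<lfloor>k\<rfloor>"
  have "7 \<le> m" "real m \<le> k" "k < real m + 1"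
    unfolding m_def using \<open>\<not> k < 7\<close> by linarith+
  have "8 * real m + 28 \<le> 2 ^ m"
    using \<open>7 \<le> m\<close> by (induction m rule: dec_induct) simp_all
  also have "\<dots> = 2 powr real m"
    by (simp add: powr_realpow)
  also have "\<dots> \<le> 2 powr k"
    using \<open>real m \<le> k\<close> by (intro powr_mono) auto
  finally show False
    using assms \<open>k < real m + 1\<close> by linarith
qed

lemma discrete_peak_bound:
  fixes T :: "'a \<Rightarrow> 'a \<Rightarrow> real" and x :: "nat \<Rightarrow> 'a" and u :: "nat \<Rightarrow> real"
  assumes "0 < \<beta>"
    and quasi: "\<And>a b c. a \<in> S \<Longrightarrow> b \<in> S \<Longrightarrow> c \<in> S \<Longrightarrow> T a c \<le> max (T a b) (T b c) + \<beta> / 2"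
    and x: "\<And>i. x i \<in> S" and "0 < n"
    and step: "\<And>i. i < n \<Longrightarrow> T (x i) (x (Suc i)) \<le> u i + \<beta>"
    and rise: "\<And>i. i < n \<Longrightarrow> u i \<le> u 0 + real i * \<beta>"
    and fall: "\<And>i. i < n \<Longrightarrow> u i + real i * \<beta> \<le> 2 * T (x 0) (x n) - u 0"
    and top: "\<And>i. i < n \<Longrightarrow> u i \<le> H"
  shows "T (x 0) (x n) < H + 7 * \<beta>"
proof -
  define K where "K = T (x 0) (x n) - H"
  define a where "a = (H - u 0) / \<beta>"
  define v where "v i = (u i - H) / \<beta>" for i
  have "2 powr (T (x 0) (x n) / \<beta>) \<le> 2 * (\<Sum>i<n. 2 powr (T (x i) (x (Suc i)) / \<beta>))"
    using quasi_ultrametric_chain_le[of S "\<lambda>a b. 2 powr (T a b / \<beta>)" x 0 n]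
      powr_quasi_ultrametric[OF \<open>0 < \<beta>\<close> quasi] x \<open>0 < n\<close>
    by (simp add: atLeast0LessThan)
  also have "\<dots> \<le> 2 * (\<Sum>i<n. 2 * 2 powr (H / \<beta>) * 2 powr v i)"
  proof (intro mult_left_mono sum_mono)
    fix i assume "i \<in> {..<n}"
    then have "T (x i) (x (Suc i)) / \<beta> \<le> (u i + \<beta>) / \<beta>"
      using step[of i] \<open>0 < \<beta>\<close> by (simp add: divide_right_mono)
    also have "\<dots> = 1 + H / \<beta> + v i"
      using \<open>0 < \<beta>\<close> unfolding v_def by (simp add: field_simps)
    finally have "T (x i) (x (Suc i)) / \<beta> \<le> 1 + H / \<beta> + v i" .
    then show "2 powr (T (x i) (x (Suc i)) / \<beta>) \<le> 2 * 2 powr (H / \<beta>) * 2 powr v i"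
      using powr_mono[of _ "1 + H / \<beta> + v i" 2] by (simp add: powr_add)
  qed simp
  also have "\<dots> = 4 * 2 powr (H / \<beta>) * (\<Sum>i<n. 2 powr v i)"
    by (simp add: sum_distrib_left mult.assoc)
  finally have chain: "2 powr (T (x 0) (x n) / \<beta>) \<le> 4 * 2 powr (H / \<beta>) * (\<Sum>i<n. 2 powr v i)" .
  show ?thesis
  proof (cases "K < 0")
    case False
    have "(\<Sum>i<n. 2 powr v i) \<le> (a + 2 * K / \<beta>) - a + 5"
    proof (rule sum_powr_tent_le)
      show "a \<le> a + 2 * K / \<beta>"
        using False \<open>0 < \<beta>\<close> by simp
      have a\<beta>: "a * \<beta> = H - u 0" and K\<beta>: "2 * K / \<beta> * \<beta> = 2 * K"
        unfolding a_def using \<open>0 < \<beta>\<close> by simp_all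
      fix i assume "i < n"
      have "(real i - a) * \<beta> = real i * \<beta> - (H - u 0)"
        by (simp only: left_diff_distrib a\<beta>)
      moreover have "(a + 2 * K / \<beta> - real i) * \<beta> = (H - u 0) + 2 * K - real i * \<beta>"
        by (simp only: left_diff_distrib distrib_right a\<beta> K\<beta>)
      ultimately have "u i - H \<le> 0" "u i - H \<le> (real i - a) * \<beta>"
        "u i - H \<le> (a + 2 * K / \<beta> - real i) * \<beta>"
        using top[OF \<open>i < n\<close>] rise[OF \<open>i < n\<close>] fall[OF \<open>i < n\<close>] K_def by linarith+
      then show "v i \<le> 0 \<and> v i \<le> real i - a \<and> v i \<le> a + 2 * K / \<beta> - real i"
        unfolding v_def using \<open>0 < \<beta>\<close> by (simp add: pos_divide_le_eq)
    qed
    then have "2 powr (T (x 0) (x n) / \<beta>) \<le> 4 * 2 powr (H / \<beta>) * (2 * K / \<beta> + 5)"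
      using chain by (simp add: order_trans)
    also have "\<dots> = 2 powr (H / \<beta>) * (8 * (K / \<beta>) + 20)"
      by (simp add: algebra_simps)
    finally have "2 powr (T (x 0) (x n) / \<beta>) \<le> 2 powr (H / \<beta>) * (8 * (K / \<beta>) + 20)" .
    moreover have "2 powr (T (x 0) (x n) / \<beta>) = 2 powr (H / \<beta>) * 2 powr (K / \<beta>)"
      unfolding K_def by (simp add: powr_add[symmetric] diff_divide_distrib)
    ultimately have "K / \<beta> < 7"
      by (intro powr_le_linear_imp_less) simp
    then show ?thesis
      using \<open>0 < \<beta>\<close> unfolding K_def by (simp add: field_simps)
  qed (use \<open>0 < \<beta>\<close> K_def in simp)
qed

section \<open>High points of \<open>d'\<close>-geodesics\<close>

lemma exists_high_point:
  fixes T :: "'a \<Rightarrow> 'a \<Rightarrow> real" and c :: "real \<Rightarrow> 'a" and u :: "real \<Rightarrow> real"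
  assumes "0 < \<beta>"
    and quasi: "\<And>a b c. a \<in> S \<Longrightarrow> b \<in> S \<Longrightarrow> c \<in> S \<Longrightarrow> T a c \<le> max (T a b) (T b c) + \<beta> / 2"
    and "0 \<le> D" and c: "c ` {0..D} \<subseteq> S"
    and near: "\<And>s s'. s \<in> {0..D} \<Longrightarrow> s' \<in> {0..D} \<Longrightarrow> T (c s) (c s') \<le> u s + \<bar>s - s'\<bar>"
    and lip: "\<And>s s'. s \<in> {0..D} \<Longrightarrow> s' \<in> {0..D} \<Longrightarrow> \<bar>u s - u s'\<bar> \<le> \<bar>s - s'\<bar>"
    and long: "D \<le> 2 * T (c 0) (c D) - u 0 - u D"
  shows "\<exists>s\<in>{0..D}. T (c 0) (c D) < u s + 7 * \<beta>"
proof -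
  define n where "n = Suc (nat \<lfloor>D / \<beta>\<rfloor>)"
  define t where "t i = min (real i * \<beta>) D" for i
  have t: "t i \<in> {0..D}" for i
    unfolding t_def using \<open>0 < \<beta>\<close> \<open>0 \<le> D\<close> by simp
  have n: "real n = of_int \<lfloor>D / \<beta>\<rfloor> + 1"
    unfolding n_def using \<open>0 \<le> D\<close> \<open>0 < \<beta>\<close> by simp
  have t_below: "t i = real i * \<beta>" if "i < n" for i
  proof -
    have "real i \<le> D / \<beta>"
      using that n of_int_floor_le[of "D / \<beta>"] by linarith
    then show ?thesis
      unfolding t_def using \<open>0 < \<beta>\<close> by (simp add: pos_le_divide_eq)
  qed
  have "D / \<beta> < real n"
    using n by linarith
  then have t_n: "t n = D"
    unfolding t_def using \<open>0 < \<beta>\<close> by (simp add: pos_divide_less_eq)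
  have t_step: "\<bar>t i - t (Suc i)\<bar> \<le> \<beta>" for i
  proof -
    have "real (Suc i) * \<beta> = real i * \<beta> + \<beta>"
      by (simp add: distrib_right)
    then show ?thesis
      unfolding t_def using \<open>0 < \<beta>\<close> by (simp add: min_def)
  qed
  obtain m where "m < n" and m_top: "\<And>i. i < n \<Longrightarrow> u (t i) \<le> u (t m)"
  proof -
    have "Max ((u \<circ> t) ` {..<n}) \<in> (u \<circ> t) ` {..<n}"
      unfolding n_def by (intro Max_in) auto
    then obtain m where "m < n" "u (t m) = Max ((u \<circ> t) ` {..<n})"
      by auto
    moreover have "u (t i) \<le> Max ((u \<circ> t) ` {..<n})" if "i < n" for i
      using that by (intro Max_ge) auto
    ultimately show ?thesis
      by (intro that[of m]) auto
  qed
  have "T (c (t 0)) (c (t n)) < u (t m) + 7 * \<beta>"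
  proof (rule discrete_peak_bound[where x = "c \<circ> t" and u = "u \<circ> t", simplified])
    show "0 < \<beta>" "0 < n" by (fact, simp add: n_def)
    show "\<And>a b c. a \<in> S \<Longrightarrow> b \<in> S \<Longrightarrow> c \<in> S \<Longrightarrow> T a c \<le> max (T a b) (T b c) + \<beta> / 2"
      by (fact quasi)
    show "c (t i) \<in> S" for i
      using c t by auto
    fix i assume "i < n"
    show "T (c (t i)) (c (t (Suc i))) \<le> u (t i) + \<beta>"
      using near[OF t t, of i "Suc i"] t_step[of i] by linarith
    show "u (t i) \<le> u (t 0) + real i * \<beta>"
      using lip[OF t t, of i 0] t_below[OF \<open>i < n\<close>] t_below[of 0] \<open>i < n\<close> \<open>0 < \<beta>\<close> by auto
    show "u (t i) + real i * \<beta> \<le> 2 * T (c (t 0)) (c (t n)) - u (t 0)"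
      using lip[OF t t, of i n] t_below[OF \<open>i < n\<close>] t_below[of 0] t_n t[of i] long \<open>i < n\<close> by auto
    show "u (t i) \<le> u (t m)"
      using m_top[OF \<open>i < n\<close>] .
  qed
  then show ?thesis
    using t_below[of 0] t_n t[of m] \<open>m < n\<close> by auto
qed

lemma total_variation_height_geodesic_le:
  assumes "Metric_space M d" and "geodesic_ray M d \<rho>" and g: "geodesic_seg M d g 0 L"
  shows "total_variation (height_fun d \<rho> \<circ> g) 0 L \<le> ereal L"
proof -
  have "\<bar>height_fun d \<rho> (g s) - height_fun d \<rho> (g s')\<bar> \<le> \<bar>s - s'\<bar>"
    if "s \<in> {0..L}" "s' \<in> {0..L}" for s s'
  proof -
    have "g s \<in> M" "g s' \<in> M" "d (g s) (g s') = \<bar>s - s'\<bar>"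
      using g that unfolding geodesic_seg_def by auto
    then show ?thesis
      using height_fun_lipschitz[OF assms(1,2)] by metis
  qed
  then show ?thesis
    using total_variation_le_lipschitz[of 0 L "height_fun d \<rho> \<circ> g"] by simp
qed

lemma total_variation_height_d_prime_geodesic_ge:
  assumes "0 \<le> \<delta>" and MS: "Metric_space M d" and hyp: "delta_hyperbolic M d \<delta>"
    and bus: "busemann_space M d" and ray: "geodesic_ray M d \<rho>" and adm: "admissible_norm N"
    and "p \<in> M" and "q \<in> M"
    and g': "geodesic_from_to M (d_prime M d (height_fun d \<rho>) N) \<gamma>' p q"
  shows "ereal (d p q - 28 * (\<delta> + 1))
    \<le> total_variation (height_fun d \<rho> \<circ> \<gamma>') 0 (d_prime M d (height_fun d \<rho>) N p q)"
proof -
  interpret Metric_space M d by fact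
  define h where "h = height_fun d \<rho>"
  define D where "D = d_prime M d h N p q"
  have geo: "geodesic_mspace M d"
    using bus unfolding busemann_space_def by blast
  have h_lip: "\<And>x y. x \<in> M \<Longrightarrow> y \<in> M \<Longrightarrow> \<bar>h x - h y\<bar> \<le> d x y"
    unfolding h_def by (rule height_fun_lipschitz[OF MS ray])
  have seg: "geodesic_seg M (d_prime M d h N) \<gamma>' 0 D" and ends: "\<gamma>' 0 = p" "\<gamma>' D = q"
    using g' unfolding geodesic_from_to_def D_def h_def by auto
  then have "0 \<le> D" and \<gamma>'M: "\<gamma>' ` {0..D} \<subseteq> M"
    unfolding geodesic_seg_def by auto
  have pair: "d (\<gamma>' s) (\<gamma>' s') + \<bar>h (\<gamma>' s) - h (\<gamma>' s')\<bar> \<le> 2 * \<bar>s - s'\<bar>"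
    if "s \<in> {0..D}" "s' \<in> {0..D}" for s s'
    by (rule d_prime_geodesic_bound[OF MS geo adm h_lip seg that])
  have "D \<le> d p q"
    unfolding D_def by (rule d_prime_bounds(2)[OF MS geo adm h_lip \<open>p \<in> M\<close> \<open>q \<in> M\<close>])
  have peak: "2 * peak_height d \<rho> p q - h p - h q = d p q"
    unfolding peak_height_def h_def by (simp add: field_simps)
  have "\<exists>s\<in>{0..D}. peak_height d \<rho> (\<gamma>' 0) (\<gamma>' D) < (h \<circ> \<gamma>') s + 7 * (2 * (\<delta> + 1))"
  proof (rule exists_high_point[where S = M])
    show "0 < 2 * (\<delta> + 1)"
      using \<open>0 \<le> \<delta>\<close> by simp
    show "peak_height d \<rho> a c \<le> max (peak_height d \<rho> a b) (peak_height d \<rho> b c) + 2 * (\<delta> + 1) / 2"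
      if "a \<in> M" "b \<in> M" "c \<in> M" for a b c
      using peak_height_quasi_ultrametric[OF MS ray hyp that] by (simp add: add_divide_distrib)
    show "D \<le> 2 * peak_height d \<rho> (\<gamma>' 0) (\<gamma>' D) - (h \<circ> \<gamma>') 0 - (h \<circ> \<gamma>') D"
      using ends peak \<open>D \<le> d p q\<close> by simp
    fix s s' assume s: "s \<in> {0..D}" "s' \<in> {0..D}"
    then have "\<gamma>' s \<in> M" "\<gamma>' s' \<in> M"
      using \<gamma>'M by auto
    with pair[OF s] h_lip
    have "d (\<gamma>' s) (\<gamma>' s') + \<bar>h (\<gamma>' s) - h (\<gamma>' s')\<bar> \<le> 2 * \<bar>s - s'\<bar>"
      and "\<bar>h (\<gamma>' s) - h (\<gamma>' s')\<bar> \<le> d (\<gamma>' s) (\<gamma>' s')"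
      by auto
    then show "peak_height d \<rho> (\<gamma>' s) (\<gamma>' s') \<le> (h \<circ> \<gamma>') s + \<bar>s - s'\<bar>"
      and "\<bar>(h \<circ> \<gamma>') s - (h \<circ> \<gamma>') s'\<bar> \<le> \<bar>s - s'\<bar>"
      unfolding peak_height_def h_def by auto
  qed (fact \<open>0 \<le> D\<close> \<gamma>'M)+
  then obtain s where "s \<in> {0..D}" and high: "peak_height d \<rho> p q < h (\<gamma>' s) + 14 * (\<delta> + 1)"
    using ends by auto
  have "ereal (d p q - 28 * (\<delta> + 1)) \<le> ereal (\<bar>h (\<gamma>' s) - h (\<gamma>' 0)\<bar> + \<bar>h (\<gamma>' D) - h (\<gamma>' s)\<bar>)"
    unfolding ends using high peak abs_ge_self[of "h (\<gamma>' s) - h p"] abs_ge_minus_self[of "h q - h (\<gamma>' s)"]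
    by simp
  also have "\<dots> \<le> total_variation (h \<circ> \<gamma>') 0 D"
    using total_variation_ge_via_point[of 0 s D "h \<circ> \<gamma>'"] \<open>s \<in> {0..D}\<close> by simp
  finally show ?thesis
    unfolding D_def h_def .
qed

theorem mainTheorem10:
  fixes \<delta> :: real
  assumes "\<delta> \<ge> 0"
  shows "\<exists>C::real. \<forall>(M::'a set) d \<rho> N.
     Metric_space M d \<and> proper_mspace M d \<and> geodesically_complete M d \<and>
     delta_hyperbolic M d \<delta> \<and> busemann_space M d \<and>
     geodesic_ray M d \<rho> \<and> vertically_convergent M d \<rho> \<and> admissible_norm N \<longrightarrow>
     (\<forall>p\<in>M. \<forall>q\<in>M. \<forall>\<gamma>' \<gamma>.
        geodesic_from_to M (d_prime M d (height_fun d \<rho>) N) \<gamma>' p q \<and>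
        geodesic_from_to M d \<gamma> p q \<longrightarrow>
        total_variation (height_fun d \<rho> \<circ> \<gamma>') 0 (d_prime M d (height_fun d \<rho>) N p q)
          \<ge> total_variation (height_fun d \<rho> \<circ> \<gamma>) 0 (d p q) - ereal C)"
proof (intro exI[of _ "28 * (\<delta> + 1)"] allI impI ballI, elim conjE)
  fix M :: "'a set" and d \<rho> N p q \<gamma>' \<gamma>
  assume MS: "Metric_space M d" and hyp: "delta_hyperbolic M d \<delta>" and bus: "busemann_space M d"
    and ray: "geodesic_ray M d \<rho>" and adm: "admissible_norm N" and "p \<in> M" and "q \<in> M"
    and g': "geodesic_from_to M (d_prime M d (height_fun d \<rho>) N) \<gamma>' p q"
    and g: "geodesic_from_to M d \<gamma> p q"
  have "total_variation (height_fun d \<rho> \<circ> \<gamma>) 0 (d p q) \<le> ereal (d p q)"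
    using total_variation_height_geodesic_le[OF MS ray] g unfolding geodesic_from_to_def by blast
  then have "total_variation (height_fun d \<rho> \<circ> \<gamma>) 0 (d p q) - ereal (28 * (\<delta> + 1))
      \<le> ereal (d p q - 28 * (\<delta> + 1))"
    by (cases "total_variation (height_fun d \<rho> \<circ> \<gamma>) 0 (d p q)") auto
  also have "\<dots> \<le> total_variation (height_fun d \<rho> \<circ> \<gamma>') 0 (d_prime M d (height_fun d \<rho>) N p q)"
    by (rule total_variation_height_d_prime_geodesic_ge[OF assms MS hyp bus ray adm \<open>p \<in> M\<close> \<open>q \<in> M\<close> g'])
  finally show "total_variation (height_fun d \<rho> \<circ> \<gamma>) 0 (d p q) - ereal (28 * (\<delta> + 1))
      \<le> total_variation (height_fun d \<rho> \<circ> \<gamma>') 0 (d_prime M d (height_fun d \<rho>) N p q)" .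
qed

end
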